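(* In the PIR-PSI under a storage constraint model described in the context, fix a realization $h$ of the cached index set, with messages labelled so that $h=\{1,\dots,M\}$ and the first $Lr_i$ symbols of $W_i$ are cached for $i=1,\dots,M$; set $r_k=0$ for $k>M$. Then for every $k\in\{1,\dots,K-1\}$, $$I\big(W_{1:k};Q_{1:N}^{[k+1,h]},A_{1:N}^{[k+1,h]}\,\big|\,\mathcal{W}_h,W_{k+1:K}\big)\ \ge\ \frac1N\, I\big(W_{1:k-1};Q_{1:N}^{[k,h]},A_{1:N}^{[k,h]}\,\big|\,\mathcal{W}_h,W_{k:K}\big)+\frac{L}{N}(1-r_k)-o(L).$$
   Context: Model: $N$ non-communicating databases each store the same $K$ independent messages $W_1,\dots,W_K$, $H(W_k)=L$, jointly independent. The user accesses an index set $h\subset[K]$, $|h|=M$, and caches the first $Lr_i$ symbols of the $i$-th accessed message, $\sum_{i=1}^M r_i=S$; $\mathcal{W}_h$ denotes the cached content. For desired index $\theta$, queries $Q_n^{[\theta,h]}$, $n\in[N]$, are independent of $W_{1:K}$; answers satisfy $H(A_n^{[\theta,h]}\mid Q_n^{[\theta,h]},W_{1:K})=0$; reliability: $H(W_\theta\mid\mathcal{W}_h,Q_{1:N}^{[\theta,h]},A_{1:N}^{[\theta,h]})=o(L)$ where $o(L)/L\to0$ as $L\to\infty$; privacy: for each database $n$, $(Q_n^{[\theta,h]},A_n^{[\theta,h]},W_{1:K})$ has the same distribution for all $\theta\in[K]$ and all $M$-subsets $h$. Notation $X_{a:b}=(X_a,\dots,X_b)$, with $W_{1:0}$ empty. 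*)

theory Defs
  imports "HOL-Probability.Probability" "HOL-Library.Landau_Symbols"
begin

text \<open>These are exactly the library abbreviations entropy_Pow, conditional_entropy_Pow
  and conditional_mutual_information_Pow of the locale information_space, written
  as global functions so that the probability space may depend on the message length L.\<close>

definition ent :: "'a measure \<Rightarrow> real \<Rightarrow> ('a \<Rightarrow> 'x) \<Rightarrow> real" where
  "ent Mm b X = prob_space.entropy Mm b (count_space (X ` space Mm)) X"

definition cent :: "'a measure \<Rightarrow> real \<Rightarrow> ('a \<Rightarrow> 'x) \<Rightarrow> ('a \<Rightarrow> 'y) \<Rightarrow> real" where
  "cent Mm b X Y = prob_space.conditional_entropy Mm b
     (count_space (X ` space Mm)) (count_space (Y ` space Mm)) X Y"

definition cmi :: "'a measure \<Rightarrow> real \<Rightarrow> ('a \<Rightarrow> 'x) \<Rightarrow> ('a \<Rightarrow> 'y) \<Rightarrow> ('a \<Rightarrow> 'z) \<Rightarrow> real" where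
  "cmi Mm b X Y Z = prob_space.conditional_mutual_information Mm b
     (count_space (X ` space Mm)) (count_space (Y ` space Mm)) (count_space (Z ` space Mm)) X Y Z"

text \<open>W_{a:b} as a list (empty if b < a).  W L j \<omega> is the j-th message (a list of symbols)
  for message length L.\<close>
definition msgs :: "(nat \<Rightarrow> nat \<Rightarrow> 'a \<Rightarrow> 'w) \<Rightarrow> nat \<Rightarrow> nat \<Rightarrow> nat \<Rightarrow> 'a \<Rightarrow> 'w list" where
  "msgs W L a b = (\<lambda>\<omega>. map (\<lambda>j. W L j \<omega>) [a..<Suc b])"

definition qlist :: "(nat \<Rightarrow> nat \<Rightarrow> nat set \<Rightarrow> nat \<Rightarrow> 'a \<Rightarrow> 'q) \<Rightarrow> nat \<Rightarrow> nat \<Rightarrow> nat set \<Rightarrow> nat \<Rightarrow> 'a \<Rightarrow> 'q list" where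
  "qlist Q L \<theta> h N = (\<lambda>\<omega>. map (\<lambda>n. Q L \<theta> h n \<omega>) [1..<Suc N])"

definition cache :: "(nat \<Rightarrow> nat \<Rightarrow> 'a \<Rightarrow> 's list) \<Rightarrow> (nat \<Rightarrow> real) \<Rightarrow> nat \<Rightarrow> nat \<Rightarrow> 'a \<Rightarrow> 's list list" where
  "cache W r M L = (\<lambda>\<omega>. map (\<lambda>i. take (nat \<lfloor>real L * r i\<rfloor>) (W L i \<omega>)) [1..<Suc M])"

end

theory Submission
  imports Defs
begin

(* Write X = W_{1:k} and Z = (cached content, W_{k+1:K}).  Together X and Z determine all messages,
   queries are independent of the messages and answers are functions of query and messages;
   hence I(X; Q_n, A_n | Z) = H(A_n | Q_n, Z) for a single database, and by subadditivity of
   conditional entropy the whole download for index k carries at most the sum of these N terms.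
   Privacy makes each single-database term the same for the indices k and k + 1, and each is at
   most the information in the whole download for k + 1: this is the factor N.  The chain rule
   then splits off I(W_k; download | Z) >= H(W_k | Z) - H(W_k | cache, download), where
   H(W_k | Z) >= L - L r_k because only L r_k symbols of W_k are cached and W_k is independent of
   the other messages, and H(W_k | cache, download) = o(L) by reliability. *)

section \<open>Entropy of simple random variables\<close>

lemma simple_function_determined:
  assumes "simple_function M Y" and "\<And>\<omega>. \<omega> \<in> space M \<Longrightarrow> X \<omega> = f (Y \<omega>)"
  shows "simple_function M X"
  using simple_function_compose1[OF assms(1), of f] assms(2) by (subst simple_function_cong) auto

lemma simple_function_Cons [simp]:
  assumes "simple_function M f" and "simple_function M g"
  shows "simple_function M (\<lambda>\<omega>. f \<omega> # g \<omega>)"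
proof (rule simple_function_determined[where f="\<lambda>(x, xs). x # xs"])
  show "simple_function M (\<lambda>\<omega>. (f \<omega>, g \<omega>))" using assms by simp
qed simp

lemma simple_function_map:
  assumes "\<And>i. i \<in> set xs \<Longrightarrow> simple_function M (F i)"
  shows "simple_function M (\<lambda>\<omega>. map (\<lambda>i. F i \<omega>) xs)"
  using assms by (induction xs) auto

context information_space
begin

lemma ent_cong:
  assumes "\<And>\<omega>. \<omega> \<in> space M \<Longrightarrow> X \<omega> = Y \<omega>"
  shows "ent M b X = ent M b Y"
proof -
  have "X ` space M = Y ` space M" using assms by (auto intro: image_cong)
  moreover have "distr M (count_space (Y ` space M)) X = distr M (count_space (Y ` space M)) Y"
    using assms by (intro distr_cong) auto
  ultimately show ?thesis unfolding ent_def entropy_def by simp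
qed

lemma ent_le_if_determined:
  assumes Y: "simple_function M Y" and X: "\<And>\<omega>. \<omega> \<in> space M \<Longrightarrow> X \<omega> = f (Y \<omega>)"
  shows "ent M b X \<le> ent M b Y"
proof -
  have "ent M b X = ent M b (f \<circ> Y)" using X by (intro ent_cong) simp
  also have "\<dots> \<le> ent M b Y" unfolding ent_def by (rule entropy_data_processing[OF Y])
  finally show ?thesis .
qed

lemma ent_eq_if_determined:
  assumes Y: "simple_function M Y"
    and X: "\<And>\<omega>. \<omega> \<in> space M \<Longrightarrow> X \<omega> = f (Y \<omega>)"
    and Y_X: "\<And>\<omega>. \<omega> \<in> space M \<Longrightarrow> Y \<omega> = g (X \<omega>)"
  shows "ent M b X = ent M b Y"
proof (rule antisym)
  show "ent M b X \<le> ent M b Y"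
    by (rule ent_le_if_determined[where f=f, OF Y X])
  have "simple_function M X"
    by (rule simple_function_determined[where f=f, OF Y X])
  then show "ent M b Y \<le> ent M b X"
    by (rule ent_le_if_determined[where f=g, OF _ Y_X])
qed

lemma cent_eq_ent:
  assumes X: "simple_function M X" and Y: "simple_function M Y"
  shows "cent M b X Y = ent M b (\<lambda>\<omega>. (X \<omega>, Y \<omega>)) - ent M b Y"
proof -
  have "ent M b (\<lambda>\<omega>. (Y \<omega>, X \<omega>)) = ent M b (\<lambda>\<omega>. (X \<omega>, Y \<omega>))"
    by (rule ent_eq_if_determined[where f="\<lambda>(x, y). (y, x)" and g="\<lambda>(y, x). (x, y)"])
       (use X Y in auto)
  then show ?thesis using entropy_chain_rule[OF Y X] unfolding cent_def ent_def by simp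
qed

lemma ent_eq_sum_superset:
  assumes X: "simple_function M X" and U: "X ` space M \<subseteq> U" "finite U"
  shows "ent M b X = - (\<Sum>x\<in>U. prob (X -` {x} \<inter> space M) * log b (prob (X -` {x} \<inter> space M)))"
proof -
  have "prob (X -` {x} \<inter> space M) = 0" if "x \<notin> X ` space M" for x
  proof -
    have "X -` {x} \<inter> space M = {}" using that by auto
    then show ?thesis by simp
  qed
  then show ?thesis
    unfolding ent_def entropy_simple_distributed[OF simple_distributedI[OF X measure_nonneg refl]]
    using U by (intro arg_cong[where f=uminus] sum.mono_neutral_left) auto
qed

lemma entropy_count_space_superset:
  assumes X: "simple_function M X" and A: "X ` space M \<subseteq> A" "finite A"
  shows "entropy b (count_space A) X = ent M b X"
proof -
  let ?P = "\<lambda>x. if x \<in> X ` space M then prob (X -` {x} \<inter> space M) else 0"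
  have "entropy b (count_space A) X = - (\<Sum>x\<in>A. ?P x * log b (?P x))"
    using A by (subst entropy_distr[OF distributed_simple_function_superset[OF X refl A]])
      (auto simp: measure_nonneg lebesgue_integral_count_space_finite)
  also have "\<dots> = - (\<Sum>x\<in>X ` space M. ?P x * log b (?P x))"
    using A by (subst sum.mono_neutral_right) auto
  also have "\<dots> = ent M b X"
    unfolding ent_def
    by (simp add: entropy_simple_distributed[OF simple_distributedI[OF X measure_nonneg refl]])
  finally show ?thesis .
qed

lemma mutual_information_count_space_superset:
  assumes X: "simple_function M X" and Y: "simple_function M Y"
    and A: "X ` space M \<subseteq> A" "finite A" and B: "Y ` space M \<subseteq> B" "finite B"
  shows "mutual_information b (count_space A) (count_space B) X Y
           = ent M b X + ent M b Y - ent M b (\<lambda>\<omega>. (X \<omega>, Y \<omega>))"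
proof -
  have XY: "simple_function M (\<lambda>\<omega>. (X \<omega>, Y \<omega>))" using X Y by simp
  have AB: "count_space A \<Otimes>\<^sub>M count_space B = count_space (A \<times> B)"
    using A B by (simp add: pair_measure_count_space)
  have XY_AB: "(\<lambda>\<omega>. (X \<omega>, Y \<omega>)) ` space M \<subseteq> A \<times> B" using A B by auto
  have "mutual_information b (count_space A) (count_space B) X Y
      = entropy b (count_space A) X + entropy b (count_space B) Y
        - entropy b (count_space A \<Otimes>\<^sub>M count_space B) (\<lambda>\<omega>. (X \<omega>, Y \<omega>))"
    by (rule mutual_information_eq_entropy_conditional_entropy_distr
          [OF _ _ distributed_simple_function_superset[OF X refl A] _
                distributed_simple_function_superset[OF Y refl B] _
                distributed_simple_function_superset[OF XY refl XY_AB, folded AB]])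
       (use A B in \<open>auto simp: measure_nonneg integrable_count_space sigma_finite_measure_count_space_finite AB\<close>)
  then show ?thesis
    unfolding AB using A B XY_AB
    by (simp add: entropy_count_space_superset X Y XY)
qed

lemma cmi_eq_ent:
  assumes X: "simple_function M X" and Y: "simple_function M Y" and Z: "simple_function M Z"
  shows "cmi M b X Y Z = ent M b (\<lambda>\<omega>. (X \<omega>, Z \<omega>)) + ent M b (\<lambda>\<omega>. (Y \<omega>, Z \<omega>))
           - ent M b (\<lambda>\<omega>. (X \<omega>, Y \<omega>, Z \<omega>)) - ent M b Z"
proof -
  have fin: "finite (X ` space M)" "finite (Y ` space M)" "finite (Z ` space M)"
    using X Y Z by (auto simp: simple_functionD)
  have YZ: "count_space (Y ` space M) \<Otimes>\<^sub>M count_space (Z ` space M)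
      = count_space (Y ` space M \<times> Z ` space M)"
    using fin by (simp add: pair_measure_count_space)
  have "(\<lambda>\<omega>. (Y \<omega>, Z \<omega>)) ` space M \<subseteq> Y ` space M \<times> Z ` space M" by auto
  then show ?thesis
    unfolding cmi_def conditional_mutual_information_def YZ
    using fin X Y Z by (simp add: mutual_information_count_space_superset)
qed

lemma ent_submodular:
  assumes "simple_function M X" "simple_function M Y" "simple_function M Z"
  shows "ent M b (\<lambda>\<omega>. (X \<omega>, Y \<omega>, Z \<omega>)) + ent M b Z
           \<le> ent M b (\<lambda>\<omega>. (X \<omega>, Z \<omega>)) + ent M b (\<lambda>\<omega>. (Y \<omega>, Z \<omega>))"
  using conditional_mutual_information_nonneg[OF assms] cmi_eq_ent[OF assms]
  unfolding cmi_def by simp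

lemma ent_subadditive:
  assumes X: "simple_function M X" and Y: "simple_function M Y"
  shows "ent M b (\<lambda>\<omega>. (X \<omega>, Y \<omega>)) \<le> ent M b X + ent M b Y"
  using entropy_chain_rule[OF X Y] conditional_entropy_less_eq_entropy[OF Y X]
  unfolding ent_def by simp

lemma cent_mono:
  assumes X: "simple_function M X" and U: "simple_function M U"
    and V: "\<And>\<omega>. \<omega> \<in> space M \<Longrightarrow> V \<omega> = f (U \<omega>)"
  shows "cent M b X U \<le> cent M b X V"
proof -
  have V_sf: "simple_function M V" by (rule simple_function_determined[where f=f, OF U V])
  have "ent M b (\<lambda>\<omega>. (X \<omega>, U \<omega>, V \<omega>)) = ent M b (\<lambda>\<omega>. (X \<omega>, U \<omega>))"
    by (rule ent_eq_if_determined[where f="\<lambda>(x, u). (x, u, f u)" and g="\<lambda>(x, u, v). (x, u)"])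
       (use X U V in auto)
  moreover have "ent M b (\<lambda>\<omega>. (U \<omega>, V \<omega>)) = ent M b U"
    by (rule ent_eq_if_determined[where f="\<lambda>u. (u, f u)" and g=fst]) (use U V in auto)
  ultimately show ?thesis
    using ent_submodular[OF X U V_sf] cent_eq_ent[OF X U] cent_eq_ent[OF X V_sf] by simp
qed

lemma cent_pair_le_add:
  assumes X: "simple_function M X" and Y: "simple_function M Y" and Z: "simple_function M Z"
  shows "cent M b (\<lambda>\<omega>. (X \<omega>, Y \<omega>)) Z \<le> cent M b X Z + cent M b Y Z"
proof -
  have "ent M b (\<lambda>\<omega>. ((X \<omega>, Y \<omega>), Z \<omega>)) = ent M b (\<lambda>\<omega>. (X \<omega>, Y \<omega>, Z \<omega>))"
    by (rule ent_eq_if_determined[where f="\<lambda>(x, y, z). ((x, y), z)" and g="\<lambda>((x, y), z). (x, y, z)"])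
       (use X Y Z in auto)
  then show ?thesis
    using ent_submodular[OF X Y Z] cent_eq_ent[OF _ Z, of "\<lambda>\<omega>. (X \<omega>, Y \<omega>)"]
      cent_eq_ent[OF X Z] cent_eq_ent[OF Y Z] X Y by simp
qed

lemma cent_map_le_sum:
  assumes A: "\<And>i. i \<in> set xs \<Longrightarrow> simple_function M (A i)"
    and Q: "\<And>i. i \<in> set xs \<Longrightarrow> simple_function M (Q i)"
    and Z: "simple_function M Z"
  shows "cent M b (\<lambda>\<omega>. map (\<lambda>i. A i \<omega>) xs) (\<lambda>\<omega>. (map (\<lambda>i. Q i \<omega>) xs, Z \<omega>))
           \<le> (\<Sum>i\<leftarrow>xs. cent M b (A i) (\<lambda>\<omega>. (Q i \<omega>, Z \<omega>)))"
  using A Q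
proof (induction xs)
  case Nil
  let ?Q = "\<lambda>\<omega>. (map (\<lambda>i. Q i \<omega>) [], Z \<omega>)"
  have "ent M b (\<lambda>\<omega>. (map (\<lambda>i. A i \<omega>) [], ?Q \<omega>)) = ent M b ?Q"
    by (rule ent_eq_if_determined[where f="\<lambda>y. ([], y)" and g=snd]) (use Z in auto)
  then show ?case using cent_eq_ent[of "\<lambda>\<omega>. map (\<lambda>i. A i \<omega>) []" ?Q] Z by simp
next
  case (Cons x xs)
  let ?As = "\<lambda>\<omega>. map (\<lambda>i. A i \<omega>) xs" and ?Qs = "\<lambda>\<omega>. map (\<lambda>i. Q i \<omega>) xs"
  let ?C = "\<lambda>\<omega>. (Q x \<omega> # ?Qs \<omega>, Z \<omega>)"
  have sf: "simple_function M (A x)" "simple_function M ?As" "simple_function M (Q x)"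
    "simple_function M ?Qs" using Cons.prems by (auto intro!: simple_function_map)
  then have sf_A: "simple_function M (\<lambda>\<omega>. A x \<omega> # ?As \<omega>)" and sf_C: "simple_function M ?C"
    using Z by simp_all
  have "ent M b (\<lambda>\<omega>. (A x \<omega> # ?As \<omega>, ?C \<omega>)) = ent M b (\<lambda>\<omega>. ((A x \<omega>, ?As \<omega>), ?C \<omega>))"
    by (rule ent_eq_if_determined[where f="\<lambda>((a, as), c). (a # as, c)" and g="\<lambda>(as, c). ((hd as, tl as), c)"])
       (use sf sf_C in auto)
  then have "cent M b (\<lambda>\<omega>. A x \<omega> # ?As \<omega>) ?C = cent M b (\<lambda>\<omega>. (A x \<omega>, ?As \<omega>)) ?C"
    using sf sf_A sf_C by (simp add: cent_eq_ent)
  also have "\<dots> \<le> cent M b (A x) ?C + cent M b ?As ?C"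
    by (rule cent_pair_le_add[OF sf(1,2) sf_C])
  also have "\<dots> \<le> cent M b (A x) (\<lambda>\<omega>. (Q x \<omega>, Z \<omega>)) + cent M b ?As (\<lambda>\<omega>. (?Qs \<omega>, Z \<omega>))"
    by (intro add_mono cent_mono[OF _ sf_C, where f="\<lambda>(q, z). (hd q, z)"]
          cent_mono[OF _ sf_C, where f="\<lambda>(q, z). (tl q, z)"]) (use sf in auto)
  also have "\<dots> \<le> (\<Sum>i\<leftarrow>x # xs. cent M b (A i) (\<lambda>\<omega>. (Q i \<omega>, Z \<omega>)))"
    using Cons by simp
  finally show ?case by simp
qed

lemma cmi_eq_cent:
  assumes X: "simple_function M X" and Y: "simple_function M Y" and Z: "simple_function M Z"
  shows "cmi M b X Y Z = cent M b X Z - cent M b X (\<lambda>\<omega>. (Y \<omega>, Z \<omega>))"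
  using cmi_eq_ent[OF X Y Z] cent_eq_ent[OF X Z] cent_eq_ent[OF X, of "\<lambda>\<omega>. (Y \<omega>, Z \<omega>)"] Y Z
  by simp

lemma cmi_mono:
  assumes X: "simple_function M X" and Y: "simple_function M Y" and Z: "simple_function M Z"
    and Y': "\<And>\<omega>. \<omega> \<in> space M \<Longrightarrow> Y' \<omega> = f (Y \<omega>)"
  shows "cmi M b X Y' Z \<le> cmi M b X Y Z"
proof -
  have "simple_function M Y'" by (rule simple_function_determined[where f=f, OF Y Y'])
  moreover have "cent M b X (\<lambda>\<omega>. (Y \<omega>, Z \<omega>)) \<le> cent M b X (\<lambda>\<omega>. (Y' \<omega>, Z \<omega>))"
    by (rule cent_mono[where f="\<lambda>(y, z). (f y, z)"]) (use X Y Z Y' in auto)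
  ultimately show ?thesis using cmi_eq_cent[OF X Y Z] cmi_eq_cent[OF X _ Z, of Y'] by simp
qed

lemma cmi_eq_if_determined:
  assumes X: "simple_function M X" and Y: "simple_function M Y" and Z: "simple_function M Z"
    and X': "\<And>\<omega>. \<omega> \<in> space M \<Longrightarrow> X' \<omega> = f (X \<omega>)" "\<And>\<omega>. \<omega> \<in> space M \<Longrightarrow> X \<omega> = f' (X' \<omega>)"
    and Z': "\<And>\<omega>. \<omega> \<in> space M \<Longrightarrow> Z' \<omega> = g (Z \<omega>)" "\<And>\<omega>. \<omega> \<in> space M \<Longrightarrow> Z \<omega> = g' (Z' \<omega>)"
  shows "cmi M b X' Y Z' = cmi M b X Y Z"
proof -
  have sf: "simple_function M X'" "simple_function M Z'"
    using simple_function_determined[OF X, of X' f] simple_function_determined[OF Z, of Z' g] X'(1) Z'(1)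
    by blast+
  have "ent M b (\<lambda>\<omega>. (X' \<omega>, Z' \<omega>)) = ent M b (\<lambda>\<omega>. (X \<omega>, Z \<omega>))"
    by (rule ent_eq_if_determined[where f="map_prod f g" and g="map_prod f' g'"])
       (use X Z X' Z' in auto)
  moreover have "ent M b (\<lambda>\<omega>. (Y \<omega>, Z' \<omega>)) = ent M b (\<lambda>\<omega>. (Y \<omega>, Z \<omega>))"
    by (rule ent_eq_if_determined[where f="map_prod id g" and g="map_prod id g'"])
       (use Y Z Z' in auto)
  moreover have "ent M b (\<lambda>\<omega>. (X' \<omega>, Y \<omega>, Z' \<omega>)) = ent M b (\<lambda>\<omega>. (X \<omega>, Y \<omega>, Z \<omega>))"
    by (rule ent_eq_if_determined[where f="map_prod f (map_prod id g)" and g="map_prod f' (map_prod id g')"])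
       (use X Y Z X' Z' in auto)
  moreover have "ent M b Z' = ent M b Z"
    by (rule ent_eq_if_determined[where f=g and g=g']) (use Z Z' in auto)
  ultimately show ?thesis using cmi_eq_ent[OF X Y Z] cmi_eq_ent[OF sf(1) Y sf(2)] by simp
qed

lemma cmi_chain:
  assumes X1: "simple_function M X1" and X2: "simple_function M X2"
    and Y: "simple_function M Y" and Z: "simple_function M Z"
  shows "cmi M b (\<lambda>\<omega>. (X1 \<omega>, X2 \<omega>)) Y Z = cmi M b X1 Y (\<lambda>\<omega>. (X2 \<omega>, Z \<omega>)) + cmi M b X2 Y Z"
proof -
  have "ent M b (\<lambda>\<omega>. ((X1 \<omega>, X2 \<omega>), Z \<omega>)) = ent M b (\<lambda>\<omega>. (X1 \<omega>, X2 \<omega>, Z \<omega>))"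
    by (rule ent_eq_if_determined[where f="\<lambda>(x1, x2, z). ((x1, x2), z)" and g="\<lambda>((x1, x2), z). (x1, x2, z)"])
       (use X1 X2 Z in auto)
  moreover have "ent M b (\<lambda>\<omega>. ((X1 \<omega>, X2 \<omega>), Y \<omega>, Z \<omega>)) = ent M b (\<lambda>\<omega>. (X1 \<omega>, Y \<omega>, X2 \<omega>, Z \<omega>))"
    by (rule ent_eq_if_determined[where f="\<lambda>(x1, y, x2, z). ((x1, x2), y, z)" and g="\<lambda>((x1, x2), y, z). (x1, y, x2, z)"])
       (use X1 X2 Y Z in auto)
  moreover have "ent M b (\<lambda>\<omega>. (Y \<omega>, X2 \<omega>, Z \<omega>)) = ent M b (\<lambda>\<omega>. (X2 \<omega>, Y \<omega>, Z \<omega>))"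
    by (rule ent_eq_if_determined[where f="\<lambda>(x2, y, z). (y, x2, z)" and g="\<lambda>(y, x2, z). (x2, y, z)"])
       (use X2 Y Z in auto)
  ultimately show ?thesis
    using X1 X2 Y Z by (simp add: cmi_eq_ent)
qed

lemma ent_pair_eq_add_if_indep:
  assumes X: "simple_function M X" and Y: "simple_function M Y"
    and indep: "\<And>x y. prob {\<omega> \<in> space M. X \<omega> = x \<and> Y \<omega> = y}
                  = prob {\<omega> \<in> space M. X \<omega> = x} * prob {\<omega> \<in> space M. Y \<omega> = y}"
  shows "ent M b (\<lambda>\<omega>. (X \<omega>, Y \<omega>)) = ent M b X + ent M b Y"
proof -
  have "\<I>(Y ; X) = 0"
  proof (rule mutual_information_eq_0_simple)
    show "simple_distributed M Y (\<lambda>y. prob (Y -` {y} \<inter> space M))"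
      "simple_distributed M X (\<lambda>x. prob (X -` {x} \<inter> space M))"
      "simple_distributed M (\<lambda>\<omega>. (Y \<omega>, X \<omega>)) (\<lambda>z. prob ((\<lambda>\<omega>. (Y \<omega>, X \<omega>)) -` {z} \<inter> space M))"
      using X Y by (auto intro!: simple_distributedI measure_nonneg)
    show "\<forall>\<omega>\<in>space M. prob ((\<lambda>\<omega>. (Y \<omega>, X \<omega>)) -` {(Y \<omega>, X \<omega>)} \<inter> space M)
        = prob (Y -` {Y \<omega>} \<inter> space M) * prob (X -` {X \<omega>} \<inter> space M)"
      using indep by (simp add: vimage_def Int_def conj_commute)
  qed
  then show ?thesis
    using mutual_information_eq_entropy_conditional_entropy[OF Y X] entropy_chain_rule[OF X Y]
    unfolding ent_def by simp
qed

lemma ent_comp_eq_if_distr_eq: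
  assumes V: "simple_function M V" and V': "simple_function M V'"
    and distr_eq: "distr M (count_space UNIV) V = distr M (count_space UNIV) V'"
  shows "ent M b (\<lambda>\<omega>. g (V \<omega>)) = ent M b (\<lambda>\<omega>. g (V' \<omega>))"
proof -
  have gV: "simple_function M (\<lambda>\<omega>. g (V \<omega>))" "simple_function M (\<lambda>\<omega>. g (V' \<omega>))"
    using V V' by (auto intro: simple_function_compose1)
  let ?U = "(\<lambda>\<omega>. g (V \<omega>)) ` space M \<union> (\<lambda>\<omega>. g (V' \<omega>)) ` space M"
  have U: "finite ?U" using gV by (auto dest: simple_functionD(1))
  have "prob ((\<lambda>\<omega>. g (V \<omega>)) -` {y} \<inter> space M) = prob ((\<lambda>\<omega>. g (V' \<omega>)) -` {y} \<inter> space M)" for y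
  proof -
    have "prob ((\<lambda>\<omega>. g (U \<omega>)) -` {y} \<inter> space M) = measure (distr M (count_space UNIV) U) (g -` {y})"
      if "simple_function M U" for U
      using that by (subst measure_distr) (auto simp: simple_function_eq_measurable vimage_def Int_def)
    then show ?thesis using V V' distr_eq by simp
  qed
  then show ?thesis
    using ent_eq_sum_superset[OF gV(1) _ U] ent_eq_sum_superset[OF gV(2) _ U] by simp
qed

lemma cmi_eq_if_distr_eq:
  assumes V: "simple_function M V" and V': "simple_function M V'"
    and distr_eq: "distr M (count_space UNIV) V = distr M (count_space UNIV) V'"
    and Y: "\<And>\<omega>. \<omega> \<in> space M \<Longrightarrow> Y \<omega> = fy (V \<omega>) \<and> Y' \<omega> = fy (V' \<omega>)"
    and X: "\<And>\<omega>. \<omega> \<in> space M \<Longrightarrow> X \<omega> = fx (V \<omega>) \<and> X \<omega> = fx (V' \<omega>)"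
    and Z: "\<And>\<omega>. \<omega> \<in> space M \<Longrightarrow> Z \<omega> = fz (V \<omega>) \<and> Z \<omega> = fz (V' \<omega>)"
  shows "cmi M b X Y Z = cmi M b X Y' Z"
proof -
  have sf: "simple_function M X" "simple_function M Y" "simple_function M Y'" "simple_function M Z"
    using simple_function_determined[OF V, of X fx] simple_function_determined[OF V, of Y fy]
      simple_function_determined[OF V', of Y' fy] simple_function_determined[OF V, of Z fz] X Y Z
    by blast+
  have "ent M b (\<lambda>\<omega>. (Y \<omega>, Z \<omega>)) = ent M b (\<lambda>\<omega>. (\<lambda>v. (fy v, fz v)) (V \<omega>))"
    "ent M b (\<lambda>\<omega>. (Y' \<omega>, Z \<omega>)) = ent M b (\<lambda>\<omega>. (\<lambda>v. (fy v, fz v)) (V' \<omega>))"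
    "ent M b (\<lambda>\<omega>. (X \<omega>, Y \<omega>, Z \<omega>)) = ent M b (\<lambda>\<omega>. (\<lambda>v. (fx v, fy v, fz v)) (V \<omega>))"
    "ent M b (\<lambda>\<omega>. (X \<omega>, Y' \<omega>, Z \<omega>)) = ent M b (\<lambda>\<omega>. (\<lambda>v. (fx v, fy v, fz v)) (V' \<omega>))"
    using X Y Z by (auto intro!: ent_cong)
  then show ?thesis
    using ent_comp_eq_if_distr_eq[OF V V' distr_eq, of "\<lambda>v. (fy v, fz v)"]
      ent_comp_eq_if_distr_eq[OF V V' distr_eq, of "\<lambda>v. (fx v, fy v, fz v)"] sf
    by (simp add: cmi_eq_ent)
qed

lemma cmi_eq_cent_if_indep_determined:
  assumes sf: "simple_function M W" "simple_function M Q" "simple_function M A"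
    and X: "\<And>\<omega>. \<omega> \<in> space M \<Longrightarrow> X \<omega> = fx (W \<omega>)"
    and Z: "\<And>\<omega>. \<omega> \<in> space M \<Longrightarrow> Z \<omega> = fz (W \<omega>)"
    and W: "\<And>\<omega>. \<omega> \<in> space M \<Longrightarrow> W \<omega> = g (X \<omega>, Z \<omega>)"
    and indep: "\<forall>S T. prob {\<omega> \<in> space M. Q \<omega> \<in> S \<and> W \<omega> \<in> T}
                  = prob {\<omega> \<in> space M. Q \<omega> \<in> S} * prob {\<omega> \<in> space M. W \<omega> \<in> T}"
    and det: "cent M b A (\<lambda>\<omega>. (Q \<omega>, W \<omega>)) = 0"
  shows "cmi M b X (\<lambda>\<omega>. (Q \<omega>, A \<omega>)) Z = cent M b A (\<lambda>\<omega>. (Q \<omega>, Z \<omega>))"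
proof -
  have sf_XZ: "simple_function M X" "simple_function M Z"
    using simple_function_determined[OF sf(1), of X fx] simple_function_determined[OF sf(1), of Z fz] X Z
    by blast+
  have QA: "simple_function M (\<lambda>\<omega>. (Q \<omega>, A \<omega>))" using sf by simp
  have "ent M b (\<lambda>\<omega>. (Q \<omega>, W \<omega>)) = ent M b Q + ent M b W"
  proof (intro ent_pair_eq_add_if_indep sf)
    fix q w
    show "prob {\<omega> \<in> space M. Q \<omega> = q \<and> W \<omega> = w}
        = prob {\<omega> \<in> space M. Q \<omega> = q} * prob {\<omega> \<in> space M. W \<omega> = w}"
      using indep[rule_format, of "{q}" "{w}"] by simp
  qed
  moreover have "ent M b (\<lambda>\<omega>. (Q \<omega>, Z \<omega>)) = ent M b Q + ent M b Z"
  proof (intro ent_pair_eq_add_if_indep sf sf_XZ)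
    fix q z
    have "{\<omega> \<in> space M. W \<omega> \<in> fz -` {z}} = {\<omega> \<in> space M. Z \<omega> = z}" using Z by auto
    moreover have "{\<omega> \<in> space M. Q \<omega> \<in> {q} \<and> W \<omega> \<in> fz -` {z}} = {\<omega> \<in> space M. Q \<omega> = q \<and> Z \<omega> = z}"
      using Z by auto
    ultimately show "prob {\<omega> \<in> space M. Q \<omega> = q \<and> Z \<omega> = z}
        = prob {\<omega> \<in> space M. Q \<omega> = q} * prob {\<omega> \<in> space M. Z \<omega> = z}"
      using indep[rule_format, of "{q}" "fz -` {z}"] by simp
  qed
  moreover have "ent M b (\<lambda>\<omega>. (X \<omega>, Z \<omega>)) = ent M b W"
  proof (rule ent_eq_if_determined[where f="\<lambda>w. (fx w, fz w)" and g=g])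
    fix \<omega> assume \<omega>: "\<omega> \<in> space M"
    show "(X \<omega>, Z \<omega>) = (fx (W \<omega>), fz (W \<omega>))" by (simp add: X[OF \<omega>] Z[OF \<omega>])
    show "W \<omega> = g (X \<omega>, Z \<omega>)" by (rule W[OF \<omega>])
  qed (rule sf)
  moreover have "ent M b (\<lambda>\<omega>. (X \<omega>, (Q \<omega>, A \<omega>), Z \<omega>)) = ent M b (\<lambda>\<omega>. (A \<omega>, Q \<omega>, W \<omega>))"
  proof (rule ent_eq_if_determined[where f="\<lambda>(a, q, w). (fx w, (q, a), fz w)"
        and g="\<lambda>(x, (q, a), z). (a, q, g (x, z))"])
    fix \<omega> assume \<omega>: "\<omega> \<in> space M"
    show "(X \<omega>, (Q \<omega>, A \<omega>), Z \<omega>) = (\<lambda>(a, q, w). (fx w, (q, a), fz w)) (A \<omega>, Q \<omega>, W \<omega>)"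
      by (simp add: X[OF \<omega>] Z[OF \<omega>])
    show "(A \<omega>, Q \<omega>, W \<omega>) = (\<lambda>(x, (q, a), z). (a, q, g (x, z))) (X \<omega>, (Q \<omega>, A \<omega>), Z \<omega>)"
      by (simp add: W[OF \<omega>])
  qed (use sf in simp)
  moreover have "ent M b (\<lambda>\<omega>. ((Q \<omega>, A \<omega>), Z \<omega>)) = ent M b (\<lambda>\<omega>. (A \<omega>, Q \<omega>, Z \<omega>))"
    by (rule ent_eq_if_determined[where f="\<lambda>(a, q, z). ((q, a), z)" and g="\<lambda>((q, a), z). (a, q, z)"])
       (use sf sf_XZ in auto)
  ultimately show ?thesis
    using det cmi_eq_ent[OF sf_XZ(1) QA sf_XZ(2)] cent_eq_ent[OF sf(3), of "\<lambda>\<omega>. (Q \<omega>, Z \<omega>)"]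
      cent_eq_ent[OF sf(3), of "\<lambda>\<omega>. (Q \<omega>, W \<omega>)"] sf sf_XZ
    by simp
qed

lemma ent_le_log_card:
  assumes X: "simple_function M X" and S: "X ` space M \<subseteq> S" "finite S"
  shows "ent M b X \<le> log b (card S)"
proof -
  have "ent M b X \<le> log b (card (X ` space M))"
    unfolding ent_def by (rule entropy_le_card[OF simple_distributedI[OF X measure_nonneg refl]])
  also have "\<dots> \<le> log b (card S)"
  proof -
    have "0 < card (X ` space M)" using S not_empty by (auto simp: card_gt_0_iff intro: finite_subset)
    moreover have "card (X ` space M) \<le> card S" using S by (simp add: card_mono)
    ultimately show ?thesis using b_gt_1 by simp
  qed
  finally show ?thesis .
qed

lemma ent_le_length:
  fixes X :: "'a \<Rightarrow> 's::finite list"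
  assumes X: "simple_function M X" and len: "\<And>\<omega>. \<omega> \<in> space M \<Longrightarrow> length (X \<omega>) = n"
  shows "ent M b X \<le> n * log b CARD('s)"
proof -
  let ?S = "{xs :: 's list. set xs \<subseteq> UNIV \<and> length xs = n}"
  have "ent M b X \<le> log b (card ?S)"
    using len by (intro ent_le_log_card[OF X] finite_lists_length_eq) auto
  also have "card ?S = CARD('s) ^ n"
    by (rule card_lists_length_eq) simp
  finally show ?thesis by (simp add: log_nat_power)
qed

lemma cent_ge_if_indep:
  assumes V: "simple_function M V" and U: "simple_function M U"
    and indep: "\<And>x y. prob {\<omega> \<in> space M. V \<omega> = x \<and> U \<omega> = y}
                  = prob {\<omega> \<in> space M. V \<omega> = x} * prob {\<omega> \<in> space M. U \<omega> = y}"
    and c: "\<And>\<omega>. \<omega> \<in> space M \<Longrightarrow> c \<omega> = f (V \<omega>)"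
  shows "ent M b V - ent M b c \<le> cent M b V (\<lambda>\<omega>. (c \<omega>, U \<omega>))"
proof -
  have sf_c: "simple_function M c"
    using simple_function_determined[OF V, of c f] c by blast
  have "ent M b (\<lambda>\<omega>. (V \<omega>, c \<omega>, U \<omega>)) = ent M b (\<lambda>\<omega>. (V \<omega>, U \<omega>))"
    by (rule ent_eq_if_determined[where f="\<lambda>(v, u). (v, f v, u)" and g="\<lambda>(v, _, u). (v, u)"])
       (use V U c in auto)
  then show ?thesis
    using ent_pair_eq_add_if_indep[OF V U indep] ent_subadditive[OF sf_c U] V U sf_c
    by (simp add: cent_eq_ent)
qed

end

lemma (in prob_space) indep_vars_prob_restrict:
  assumes indep: "indep_vars (\<lambda>_. count_space UNIV) X I"
    and J: "finite J" "J \<subseteq> I" and k: "k \<in> I" "k \<notin> J"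
  shows "prob {\<omega> \<in> space M. X k \<omega> = x \<and> restrict (\<lambda>j. X j \<omega>) J = y}
           = prob {\<omega> \<in> space M. X k \<omega> = x} * prob {\<omega> \<in> space M. restrict (\<lambda>j. X j \<omega>) J = y}"
proof (cases "y \<in> extensional J")
  case False
  then have "restrict (\<lambda>j. X j \<omega>) J \<noteq> y" for \<omega> by auto
  then show ?thesis by simp
next
  case True
  let ?E = "\<lambda>j. X j -` {(y(k := x)) j} \<inter> space M"
  have restrict_eq: "restrict (\<lambda>j. X j \<omega>) J = y \<longleftrightarrow> (\<forall>j\<in>J. X j \<omega> = y j)" for \<omega>
    using True by (auto simp: fun_eq_iff extensional_def)
  have E_k: "?E k = {\<omega> \<in> space M. X k \<omega> = x}" by auto
  have E_J: "prob {\<omega> \<in> space M. \<forall>j\<in>J. X j \<omega> = y j} = (\<Prod>j\<in>J. prob (?E j))"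
  proof (cases "J = {}")
    case True
    then show ?thesis by (simp add: prob_space)
  next
    case False
    have "{\<omega> \<in> space M. \<forall>j\<in>J. X j \<omega> = y j} = (\<Inter>j\<in>J. ?E j)"
      using False k by auto
    then show ?thesis using indep_varsD[OF indep False J(1,2)] by simp
  qed
  have "{\<omega> \<in> space M. X k \<omega> = x \<and> (\<forall>j\<in>J. X j \<omega> = y j)} = (\<Inter>j\<in>insert k J. ?E j)"
    using k by auto
  also have "prob \<dots> = (\<Prod>j\<in>insert k J. prob (?E j))"
    by (rule indep_varsD[OF indep]) (use J k in auto)
  also have "\<dots> = prob (?E k) * (\<Prod>j\<in>J. prob (?E j))"
    using J(1) k(2) by (rule prod.insert)
  also have "\<dots> = prob {\<omega> \<in> space M. X k \<omega> = x} * prob {\<omega> \<in> space M. \<forall>j\<in>J. X j \<omega> = y j}"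
    unfolding E_k E_J ..
  finally show ?thesis unfolding restrict_eq .
qed

section \<open>Messages, queries and the cache\<close>

lemma msgs_nth: "i \<in> {1..K} \<Longrightarrow> msgs W L 1 K \<omega> ! (i - 1) = W L i \<omega>"
  by (auto simp: msgs_def simp del: upt_Suc)

lemma take_msgs: "k \<le> K \<Longrightarrow> take k (msgs W L 1 K \<omega>) = msgs W L 1 k \<omega>"
  by (simp add: msgs_def take_map del: upt_Suc)

lemma drop_msgs: "k \<le> K \<Longrightarrow> drop k (msgs W L 1 K \<omega>) = msgs W L (k + 1) K \<omega>"
  by (simp add: msgs_def drop_map del: upt_Suc)

lemma msgs_snoc: "1 \<le> k \<Longrightarrow> msgs W L 1 k \<omega> = msgs W L 1 (k - 1) \<omega> @ [W L k \<omega>]"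
  by (cases k) (auto simp: msgs_def)

lemma msgs_Cons: "k \<le> K \<Longrightarrow> msgs W L k K \<omega> = W L k \<omega> # msgs W L (k + 1) K \<omega>"
  by (simp add: msgs_def upt_conv_Cons del: upt_Suc)

lemma qlist_nth: "n \<in> {1..N} \<Longrightarrow> qlist Q L \<theta> h N \<omega> ! (n - 1) = Q L \<theta> h n \<omega>"
  by (auto simp: qlist_def simp del: upt_Suc)

definition cache_of_list :: "(nat \<Rightarrow> real) \<Rightarrow> nat \<Rightarrow> nat \<Rightarrow> 's list list \<Rightarrow> 's list list" where
  "cache_of_list r M L ws = map (\<lambda>i. take (nat \<lfloor>real L * r i\<rfloor>) (ws ! (i - 1))) [1..<Suc M]"

lemma cache_eq_cache_of_list:
  assumes "M \<le> K"
  shows "cache W r M L \<omega> = cache_of_list r M L (msgs W L 1 K \<omega>)"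
proof -
  have "W L i \<omega> = msgs W L 1 K \<omega> ! (i - 1)" if "i \<in> set [1..<Suc M]" for i
    using that assms by (simp add: msgs_nth del: upt_Suc One_nat_def)
  then show ?thesis unfolding cache_def cache_of_list_def by (intro map_cong) auto
qed

section \<open>One step of the converse\<close>

locale pir_setting = information_space P b
  for P :: "'a measure" and b :: real +
  fixes W :: "nat \<Rightarrow> nat \<Rightarrow> 'a \<Rightarrow> 's::finite list"
    and Q :: "nat \<Rightarrow> nat \<Rightarrow> nat set \<Rightarrow> nat \<Rightarrow> 'a \<Rightarrow> 'qu"
    and A :: "nat \<Rightarrow> nat \<Rightarrow> nat set \<Rightarrow> nat \<Rightarrow> 'a \<Rightarrow> 'an"
    and r :: "nat \<Rightarrow> real"
    and N K M k L :: nat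
  assumes b_card: "b = real CARD('s)"
    and N_pos: "1 \<le> N" and M_le: "M \<le> K" and k_pos: "1 \<le> k" and k_less: "k < K"
    and r_k_nonneg: "0 \<le> r k"
    and W_sf: "\<And>j. j \<in> {1..K} \<Longrightarrow> simple_function P (W L j)"
    and W_k_len: "\<And>\<omega>. \<omega> \<in> space P \<Longrightarrow> length (W L k \<omega>) = L"
    and W_k_ent: "ent P b (W L k) = real L"
    and W_indep: "indep_vars (\<lambda>_. count_space UNIV) (W L) {1..K}"
    and Q_sf: "\<And>\<theta> n. \<theta> \<in> {k, k + 1} \<Longrightarrow> n \<in> {1..N} \<Longrightarrow> simple_function P (Q L \<theta> {1..M} n)"
    and A_sf: "\<And>\<theta> n. \<theta> \<in> {k, k + 1} \<Longrightarrow> n \<in> {1..N} \<Longrightarrow> simple_function P (A L \<theta> {1..M} n)"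
    and Q_indep: "\<forall>X Y. prob {\<omega> \<in> space P. qlist Q L k {1..M} N \<omega> \<in> X \<and> msgs W L 1 K \<omega> \<in> Y}
                   = prob {\<omega> \<in> space P. qlist Q L k {1..M} N \<omega> \<in> X}
                     * prob {\<omega> \<in> space P. msgs W L 1 K \<omega> \<in> Y}"
    and A_det: "\<And>n. n \<in> {1..N} \<Longrightarrow>
                 cent P b (A L k {1..M} n) (\<lambda>\<omega>. (Q L k {1..M} n \<omega>, msgs W L 1 K \<omega>)) = 0"
    and privacy: "\<And>n. n \<in> {1..N} \<Longrightarrow>
                 distr P (count_space UNIV) (\<lambda>\<omega>. (Q L (k + 1) {1..M} n \<omega>, A L (k + 1) {1..M} n \<omega>, msgs W L 1 K \<omega>))
                 = distr P (count_space UNIV) (\<lambda>\<omega>. (Q L k {1..M} n \<omega>, A L k {1..M} n \<omega>, msgs W L 1 K \<omega>))"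
begin

(* Keeps the index set {1..M} of the queries syntactically intact, so that Q_sf and A_sf
   work as simp rules. *)
declare One_nat_def [simp del]

lemma k_le [simp]: "k \<le> K" "k - 1 \<le> K"
  using k_less by simp_all

abbreviation "query \<theta> n \<equiv> Q L \<theta> {1..M} n"
abbreviation "answer \<theta> n \<equiv> A L \<theta> {1..M} n"
abbreviation "queries \<theta> \<equiv> qlist Q L \<theta> {1..M} N"
abbreviation "answers \<theta> \<equiv> qlist A L \<theta> {1..M} N"
abbreviation "download \<theta> \<equiv> \<lambda>\<omega>. (queries \<theta> \<omega>, answers \<theta> \<omega>)"
abbreviation "all_msgs \<equiv> msgs W L 1 K"
abbreviation "side_info i \<equiv> \<lambda>\<omega>. (cache W r M L \<omega>, msgs W L i K \<omega>)"

lemma simple_function_msgs [simp]: "1 \<le> i \<Longrightarrow> j \<le> K \<Longrightarrow> simple_function P (msgs W L i j)"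
  unfolding msgs_def by (rule simple_function_map) (auto intro: W_sf)

lemma simple_function_W_k [simp]: "simple_function P (W L k)"
  using W_sf k_pos k_less by simp

lemma simple_function_cache [simp]: "simple_function P (cache W r M L)"
  unfolding cache_def by (intro simple_function_map simple_function_compose1[where g="take _"] W_sf)
    (use M_le in auto)

declare Q_sf [simp] A_sf [simp]

lemma simple_function_queries_answers [simp]:
  "\<theta> \<in> {k, k + 1} \<Longrightarrow> simple_function P (queries \<theta>)"
  "\<theta> \<in> {k, k + 1} \<Longrightarrow> simple_function P (answers \<theta>)"
  unfolding qlist_def by (auto intro!: simple_function_map simp del: upt_Suc)

lemma msgs_prefix_eq_take: "msgs W L 1 k \<omega> = take k (all_msgs \<omega>)"
  using k_less by (simp add: take_msgs)

lemma side_info_Suc_eq: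
  "side_info (k + 1) \<omega> = (cache_of_list r M L (all_msgs \<omega>), drop k (all_msgs \<omega>))"
  using k_less M_le by (simp add: drop_msgs cache_eq_cache_of_list)

lemma all_msgs_eq_append: "all_msgs \<omega> = msgs W L 1 k \<omega> @ msgs W L (k + 1) K \<omega>"
  using k_less by (metis append_take_drop_id drop_msgs less_imp_le_nat take_msgs)

lemma query_indep_msgs:
  assumes n: "n \<in> {1..N}"
  shows "\<forall>S T. prob {\<omega> \<in> space P. query k n \<omega> \<in> S \<and> all_msgs \<omega> \<in> T}
           = prob {\<omega> \<in> space P. query k n \<omega> \<in> S} * prob {\<omega> \<in> space P. all_msgs \<omega> \<in> T}"
proof (intro allI)
  fix S T
  have "query k n \<omega> \<in> S \<longleftrightarrow> queries k \<omega> \<in> (\<lambda>qs. qs ! (n - 1)) -` S" for \<omega>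
    by (simp add: qlist_nth[OF n])
  then show "prob {\<omega> \<in> space P. query k n \<omega> \<in> S \<and> all_msgs \<omega> \<in> T}
      = prob {\<omega> \<in> space P. query k n \<omega> \<in> S} * prob {\<omega> \<in> space P. all_msgs \<omega> \<in> T}"
    using Q_indep[rule_format, of "(\<lambda>qs. qs ! (n - 1)) -` S" T] by simp
qed

lemma cent_answers_eq_0: "cent P b (answers k) (\<lambda>\<omega>. (queries k \<omega>, all_msgs \<omega>)) = 0"
proof (rule antisym)
  have "cent P b (answers k) (\<lambda>\<omega>. (queries k \<omega>, all_msgs \<omega>))
      \<le> (\<Sum>n\<leftarrow>[1..<Suc N]. cent P b (answer k n) (\<lambda>\<omega>. (query k n \<omega>, all_msgs \<omega>)))"
    unfolding qlist_def by (rule cent_map_le_sum) (auto simp del: upt_Suc)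
  also have "\<dots> = (\<Sum>n\<in>{1..N}. cent P b (answer k n) (\<lambda>\<omega>. (query k n \<omega>, all_msgs \<omega>)))"
    by (simp add: sum_list_distinct_conv_sum_set atLeastLessThanSuc_atLeastAtMost del: upt_Suc)
  also have "\<dots> = 0"
    by (simp add: A_det)
  finally show "cent P b (answers k) (\<lambda>\<omega>. (queries k \<omega>, all_msgs \<omega>)) \<le> 0" .
  show "0 \<le> cent P b (answers k) (\<lambda>\<omega>. (queries k \<omega>, all_msgs \<omega>))"
    unfolding cent_def by (rule conditional_entropy_nonneg) simp_all
qed

lemma cmi_prefix_eq_cent:
  assumes sf: "simple_function P Y" "simple_function P Y'"
    and indep: "\<forall>S T. prob {\<omega> \<in> space P. Y \<omega> \<in> S \<and> all_msgs \<omega> \<in> T}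
                  = prob {\<omega> \<in> space P. Y \<omega> \<in> S} * prob {\<omega> \<in> space P. all_msgs \<omega> \<in> T}"
    and det: "cent P b Y' (\<lambda>\<omega>. (Y \<omega>, all_msgs \<omega>)) = 0"
  shows "cmi P b (msgs W L 1 k) (\<lambda>\<omega>. (Y \<omega>, Y' \<omega>)) (side_info (k + 1))
           = cent P b Y' (\<lambda>\<omega>. (Y \<omega>, side_info (k + 1) \<omega>))"
proof (rule cmi_eq_cent_if_indep_determined[where fx="take k"
      and fz="\<lambda>ws. (cache_of_list r M L ws, drop k ws)" and g="\<lambda>(x, _, rest). x @ rest"])
  fix \<omega>
  show "msgs W L 1 k \<omega> = take k (all_msgs \<omega>)" by (rule msgs_prefix_eq_take)
  show "side_info (k + 1) \<omega> = (\<lambda>ws. (cache_of_list r M L ws, drop k ws)) (all_msgs \<omega>)"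
    by (simp add: side_info_Suc_eq)
  show "all_msgs \<omega> = (\<lambda>(x, _, rest). x @ rest) (msgs W L 1 k \<omega>, side_info (k + 1) \<omega>)"
    by (simp add: all_msgs_eq_append)
qed (use sf indep det in simp_all)

lemma cmi_download_le_sum:
  "cmi P b (msgs W L 1 k) (download k) (side_info (k + 1))
     \<le> (\<Sum>n\<in>{1..N}. cmi P b (msgs W L 1 k) (\<lambda>\<omega>. (query k n \<omega>, answer k n \<omega>)) (side_info (k + 1)))"
proof -
  have "cmi P b (msgs W L 1 k) (download k) (side_info (k + 1))
      = cent P b (answers k) (\<lambda>\<omega>. (queries k \<omega>, side_info (k + 1) \<omega>))"
    by (rule cmi_prefix_eq_cent) (simp_all add: Q_indep cent_answers_eq_0)
  also have "\<dots> \<le> (\<Sum>n\<leftarrow>[1..<Suc N]. cent P b (answer k n) (\<lambda>\<omega>. (query k n \<omega>, side_info (k + 1) \<omega>)))"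
    unfolding qlist_def by (rule cent_map_le_sum) (auto simp del: upt_Suc)
  also have "\<dots> = (\<Sum>n\<in>{1..N}. cent P b (answer k n) (\<lambda>\<omega>. (query k n \<omega>, side_info (k + 1) \<omega>)))"
    by (simp add: sum_list_distinct_conv_sum_set atLeastLessThanSuc_atLeastAtMost del: upt_Suc)
  also have "\<dots> = (\<Sum>n\<in>{1..N}. cmi P b (msgs W L 1 k) (\<lambda>\<omega>. (query k n \<omega>, answer k n \<omega>)) (side_info (k + 1)))"
    by (intro sum.cong refl cmi_prefix_eq_cent[symmetric]) (simp_all add: query_indep_msgs A_det)
  finally show ?thesis .
qed

lemma cmi_answer_privacy:
  assumes n: "n \<in> {1..N}"
  shows "cmi P b (msgs W L 1 k) (\<lambda>\<omega>. (query (k + 1) n \<omega>, answer (k + 1) n \<omega>)) (side_info (k + 1))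
           = cmi P b (msgs W L 1 k) (\<lambda>\<omega>. (query k n \<omega>, answer k n \<omega>)) (side_info (k + 1))"
  by (rule cmi_eq_if_distr_eq[OF _ _ privacy[OF n], where fy="\<lambda>(q, a, _). (q, a)"
        and fx="\<lambda>(_, _, ws). take k ws" and fz="\<lambda>(_, _, ws). (cache_of_list r M L ws, drop k ws)"])
     (use n in \<open>simp_all add: msgs_prefix_eq_take side_info_Suc_eq\<close>)

lemma cmi_answer_le_download:
  assumes n: "n \<in> {1..N}"
  shows "cmi P b (msgs W L 1 k) (\<lambda>\<omega>. (query (k + 1) n \<omega>, answer (k + 1) n \<omega>)) (side_info (k + 1))
           \<le> cmi P b (msgs W L 1 k) (download (k + 1)) (side_info (k + 1))"
  by (rule cmi_mono[where f="\<lambda>(qs, as). (qs ! (n - 1), as ! (n - 1))"]) (simp_all add: qlist_nth[OF n])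

lemma cmi_download_chain:
  "cmi P b (msgs W L 1 k) (download k) (side_info (k + 1))
     = cmi P b (msgs W L 1 (k - 1)) (download k) (side_info k)
       + cmi P b (W L k) (download k) (side_info (k + 1))"
proof -
  have "cmi P b (msgs W L 1 k) (download k) (side_info (k + 1))
      = cmi P b (\<lambda>\<omega>. (msgs W L 1 (k - 1) \<omega>, W L k \<omega>)) (download k) (side_info (k + 1))"
    by (rule cmi_eq_if_determined[where f="\<lambda>(x, w). x @ [w]" and f'="\<lambda>x. (butlast x, last x)"
          and g=id and g'=id]) (simp_all add: msgs_snoc k_pos)
  also have "\<dots> = cmi P b (msgs W L 1 (k - 1)) (download k) (\<lambda>\<omega>. (W L k \<omega>, side_info (k + 1) \<omega>))
      + cmi P b (W L k) (download k) (side_info (k + 1))"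
    by (rule cmi_chain) simp_all
  also have "cmi P b (msgs W L 1 (k - 1)) (download k) (\<lambda>\<omega>. (W L k \<omega>, side_info (k + 1) \<omega>))
      = cmi P b (msgs W L 1 (k - 1)) (download k) (side_info k)"
    by (rule cmi_eq_if_determined[where f=id and f'=id and g="\<lambda>(c, ws). (hd ws, c, tl ws)"
          and g'="\<lambda>(w, c, ws). (c, w # ws)"]) (simp_all add: msgs_Cons)
  finally show ?thesis .
qed

lemma cent_message_ge:
  "real L - real (nat \<lfloor>real L * r k\<rfloor>) \<le> cent P b (W L k) (side_info (k + 1))"
proof -
  define J where "J = {1..K} - {k}"
  let ?m = "nat \<lfloor>real L * r k\<rfloor>"
  let ?c = "\<lambda>\<omega>. take ?m (W L k \<omega>)"
  let ?U = "\<lambda>\<omega>. restrict (\<lambda>j. W L j \<omega>) J"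
  (* Only the first ?m symbols of W_k are cached, so the side information is a function of
     that prefix and of the other messages, on which W_k does not depend. *)
  define F :: "'s list \<times> (nat \<Rightarrow> 's list) \<Rightarrow> 's list list \<times> 's list list"
    where "F = (\<lambda>(c, U). (map (\<lambda>i. take (nat \<lfloor>real L * r i\<rfloor>) ((U(k := c)) i)) [1..<Suc M],
                                  map (U(k := c)) [k + 1..<Suc K]))"
  have J: "finite J" "J \<subseteq> {1..K}" "k \<in> {1..K}" "k \<notin> J"
    using k_pos k_less by (auto simp: J_def)
  have "simple_function P (\<lambda>\<omega>. restrict (\<lambda>j. all_msgs \<omega> ! (j - 1)) J)"
    by (rule simple_function_compose1[OF simple_function_msgs]) auto
  moreover have "restrict (\<lambda>j. all_msgs \<omega> ! (j - 1)) J = ?U \<omega>" for \<omega>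
    using J(2) by (intro restrict_ext) (auto simp: msgs_nth)
  ultimately have sf_U: "simple_function P ?U" by simp
  have sf_c: "simple_function P ?c" by (rule simple_function_compose1[OF simple_function_W_k])
  have side: "side_info (k + 1) \<omega> = F (?c \<omega>, ?U \<omega>)" for \<omega>
    using M_le by (auto simp: F_def J_def cache_def msgs_def intro!: map_cong simp del: upt_Suc)
  have "real L - ent P b ?c \<le> cent P b (W L k) (\<lambda>\<omega>. (?c \<omega>, ?U \<omega>))"
    using cent_ge_if_indep[OF simple_function_W_k sf_U indep_vars_prob_restrict[OF W_indep J], of ?c "take ?m"]
      W_k_ent by simp
  moreover have "ent P b ?c \<le> ?m"
  proof -
    have "ent P b ?c \<le> min ?m L * log b CARD('s)"
      by (intro ent_le_length sf_c) (simp add: W_k_len)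
    then show ?thesis using b_card b_gt_1 by simp
  qed
  moreover have "cent P b (W L k) (\<lambda>\<omega>. (?c \<omega>, ?U \<omega>)) \<le> cent P b (W L k) (side_info (k + 1))"
    by (rule cent_mono[where f=F]) (simp_all add: sf_c sf_U side)
  ultimately show ?thesis by linarith
qed

lemma cmi_step_bound:
  "cmi P b (msgs W L 1 (k - 1)) (download k) (side_info k) + real L * (1 - r k)
     - cent P b (W L k) (\<lambda>\<omega>. (cache W r M L \<omega>, download k \<omega>))
   \<le> real N * cmi P b (msgs W L 1 k) (download (k + 1)) (side_info (k + 1))"
proof -
  let ?X = "msgs W L 1 k" and ?Z = "side_info (k + 1)"
  have "cmi P b ?X (download k) ?Z \<le> (\<Sum>n\<in>{1..N}. cmi P b ?X (\<lambda>\<omega>. (query k n \<omega>, answer k n \<omega>)) ?Z)"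
    by (rule cmi_download_le_sum)
  also have "\<dots> = (\<Sum>n\<in>{1..N}. cmi P b ?X (\<lambda>\<omega>. (query (k + 1) n \<omega>, answer (k + 1) n \<omega>)) ?Z)"
    by (intro sum.cong refl cmi_answer_privacy[symmetric])
  also have "\<dots> \<le> (\<Sum>n\<in>{1..N}. cmi P b ?X (download (k + 1)) ?Z)"
    by (intro sum_mono cmi_answer_le_download)
  also have "\<dots> = real N * cmi P b ?X (download (k + 1)) ?Z"
    by simp
  finally have download: "cmi P b ?X (download k) ?Z \<le> real N * cmi P b ?X (download (k + 1)) ?Z" .
  have "cent P b (W L k) (\<lambda>\<omega>. (download k \<omega>, ?Z \<omega>))
      \<le> cent P b (W L k) (\<lambda>\<omega>. (cache W r M L \<omega>, download k \<omega>))"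
    by (rule cent_mono[where f="\<lambda>(y, c, _). (c, y)"]) simp_all
  then have message: "real L - real (nat \<lfloor>real L * r k\<rfloor>)
      - cent P b (W L k) (\<lambda>\<omega>. (cache W r M L \<omega>, download k \<omega>)) \<le> cmi P b (W L k) (download k) ?Z"
    using cent_message_ge by (simp add: cmi_eq_cent)
  have "real (nat \<lfloor>real L * r k\<rfloor>) \<le> real L * r k"
    using r_k_nonneg by simp
  then show ?thesis
    using download message cmi_download_chain by (simp add: algebra_simps)
qed

end

theorem lemma2:
  fixes Mp :: "nat \<Rightarrow> 'a measure"
    and W :: "nat \<Rightarrow> nat \<Rightarrow> 'a \<Rightarrow> 's::finite list"
    and Q :: "nat \<Rightarrow> nat \<Rightarrow> nat set \<Rightarrow> nat \<Rightarrow> 'a \<Rightarrow> 'qu"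
    and A :: "nat \<Rightarrow> nat \<Rightarrow> nat set \<Rightarrow> nat \<Rightarrow> 'a \<Rightarrow> 'an"
    and r :: "nat \<Rightarrow> real"
    and N K M k :: nat
  defines "b \<equiv> real CARD('s)"
  assumes alphabet: "CARD('s) \<ge> 2"
    and N_pos: "N \<ge> 1"
    and M_le: "M \<le> K"
    and r_range: "\<And>i. i \<in> {1..M} \<Longrightarrow> 0 \<le> r i \<and> r i \<le> 1"
    and r_zero: "\<And>i. i > M \<Longrightarrow> r i = 0"
    and prob: "\<And>L. prob_space (Mp L)"
    and W_sf: "\<And>L j. j \<in> {1..K} \<Longrightarrow> simple_function (Mp L) (W L j)"
    and W_len: "\<And>L j \<omega>. j \<in> {1..K} \<Longrightarrow> \<omega> \<in> space (Mp L) \<Longrightarrow> length (W L j \<omega>) = L"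
    and W_ent: "\<And>L j. j \<in> {1..K} \<Longrightarrow> ent (Mp L) b (W L j) = real L"
    and W_indep: "\<And>L. prob_space.indep_vars (Mp L) (\<lambda>_. count_space UNIV) (W L) {1..K}"
    and Q_sf: "\<And>L \<theta> h n. \<theta> \<in> {1..K} \<Longrightarrow> h \<subseteq> {1..K} \<Longrightarrow> card h = M \<Longrightarrow> n \<in> {1..N} \<Longrightarrow>
                 simple_function (Mp L) (Q L \<theta> h n)"
    and A_sf: "\<And>L \<theta> h n. \<theta> \<in> {1..K} \<Longrightarrow> h \<subseteq> {1..K} \<Longrightarrow> card h = M \<Longrightarrow> n \<in> {1..N} \<Longrightarrow>
                 simple_function (Mp L) (A L \<theta> h n)"
    and Q_indep: "\<And>L \<theta> h. \<theta> \<in> {1..K} \<Longrightarrow> h \<subseteq> {1..K} \<Longrightarrow> card h = M \<Longrightarrow>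
                 (\<forall>X Y. measure (Mp L) {\<omega> \<in> space (Mp L). qlist Q L \<theta> h N \<omega> \<in> X \<and> msgs W L 1 K \<omega> \<in> Y}
                   = measure (Mp L) {\<omega> \<in> space (Mp L). qlist Q L \<theta> h N \<omega> \<in> X}
                     * measure (Mp L) {\<omega> \<in> space (Mp L). msgs W L 1 K \<omega> \<in> Y})"
    and A_det: "\<And>L \<theta> h n. \<theta> \<in> {1..K} \<Longrightarrow> h \<subseteq> {1..K} \<Longrightarrow> card h = M \<Longrightarrow> n \<in> {1..N} \<Longrightarrow>
                 cent (Mp L) b (A L \<theta> h n) (\<lambda>\<omega>. (Q L \<theta> h n \<omega>, msgs W L 1 K \<omega>)) = 0"
    and reliable: "\<And>\<theta>. \<theta> \<in> {1..K} \<Longrightarrow>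
                 (\<lambda>L. cent (Mp L) b (W L \<theta>)
                    (\<lambda>\<omega>. (cache W r M L \<omega>, qlist Q L \<theta> {1..M} N \<omega>, qlist A L \<theta> {1..M} N \<omega>)))
                 \<in> o(\<lambda>L. real L)"
    and privacy: "\<And>L \<theta> \<theta>' h h' n. \<theta> \<in> {1..K} \<Longrightarrow> \<theta>' \<in> {1..K} \<Longrightarrow>
                 h \<subseteq> {1..K} \<Longrightarrow> card h = M \<Longrightarrow> h' \<subseteq> {1..K} \<Longrightarrow> card h' = M \<Longrightarrow> n \<in> {1..N} \<Longrightarrow>
                 distr (Mp L) (count_space UNIV) (\<lambda>\<omega>. (Q L \<theta> h n \<omega>, A L \<theta> h n \<omega>, msgs W L 1 K \<omega>))
                 = distr (Mp L) (count_space UNIV) (\<lambda>\<omega>. (Q L \<theta>' h' n \<omega>, A L \<theta>' h' n \<omega>, msgs W L 1 K \<omega>))"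
    and k_range: "k \<in> {1..K - 1}"
  shows "\<exists>f. f \<in> o(\<lambda>L. real L) \<and> (\<forall>L.
           cmi (Mp L) b (msgs W L 1 k)
               (\<lambda>\<omega>. (qlist Q L (k + 1) {1..M} N \<omega>, qlist A L (k + 1) {1..M} N \<omega>))
               (\<lambda>\<omega>. (cache W r M L \<omega>, msgs W L (k + 1) K \<omega>))
           \<ge> 1 / real N *
             cmi (Mp L) b (msgs W L 1 (k - 1))
               (\<lambda>\<omega>. (qlist Q L k {1..M} N \<omega>, qlist A L k {1..M} N \<omega>))
               (\<lambda>\<omega>. (cache W r M L \<omega>, msgs W L k K \<omega>))
             + real L / real N * (1 - r k) - f L)"
proof -
  have k: "1 \<le> k" "k < K" using k_range by auto
  have h: "{1..M} \<subseteq> {1..K}" "card {1..M} = M" using M_le by auto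
  define f where "f L = cent (Mp L) b (W L k)
    (\<lambda>\<omega>. (cache W r M L \<omega>, qlist Q L k {1..M} N \<omega>, qlist A L k {1..M} N \<omega>)) / real N" for L
  let ?prev = "\<lambda>L. cmi (Mp L) b (msgs W L 1 (k - 1))
    (\<lambda>\<omega>. (qlist Q L k {1..M} N \<omega>, qlist A L k {1..M} N \<omega>)) (\<lambda>\<omega>. (cache W r M L \<omega>, msgs W L k K \<omega>))"
  let ?next = "\<lambda>L. cmi (Mp L) b (msgs W L 1 k)
    (\<lambda>\<omega>. (qlist Q L (k + 1) {1..M} N \<omega>, qlist A L (k + 1) {1..M} N \<omega>))
    (\<lambda>\<omega>. (cache W r M L \<omega>, msgs W L (k + 1) K \<omega>))"
  have setting: "pir_setting (Mp L) b W Q A r N K M k L" for L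
  proof (intro pir_setting.intro pir_setting_axioms.intro information_space.intro
      information_space_axioms.intro)
    show "prob_space (Mp L)" "1 < b" "b = real CARD('s)"
      using prob alphabet by (simp_all add: b_def)
    show "1 \<le> N" "M \<le> K" "1 \<le> k" "k < K" "0 \<le> r k"
      using N_pos M_le k r_range[of k] r_zero[of k] by (cases "k \<le> M"; simp)+
  qed (use k h in \<open>auto intro!: W_sf W_len W_ent W_indep Q_sf A_sf Q_indep[rule_format] A_det privacy
        simp del: One_nat_def\<close>)
  moreover have "1 / real N * ?prev L + real L / real N * (1 - r k) - f L \<le> ?next L" for L
  proof -
    have "1 / real N * ?prev L + real L / real N * (1 - r k) - f L
        = (?prev L + real L * (1 - r k) - real N * f L) / real N"
      using N_pos by (simp add: field_simps)
    also have "\<dots> \<le> ?next L"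
      using pir_setting.cmi_step_bound[OF setting] N_pos
      by (simp add: f_def pos_divide_le_eq mult.commute)
    finally show ?thesis .
  qed
  moreover have "f \<in> o(\<lambda>L. real L)"
    using reliable[of k] k N_pos unfolding f_def by simp
  ultimately show ?thesis by blast
qed

end
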